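(* Let $P\subset\mathbb{R}^{n+1}$ be an $n$-dimensional lattice polytope contained in the affine hyperplane $\{x_{n+1}=1\}$, of degree $d$, let $x$ be a lattice point in the relative interior of $(n-d+1)P$, and let $S\subset P$ be an $n$-dimensional lattice simplex with vertices $v_0,\dots,v_n$ such that $x$ lies in the cone spanned by $S$. Let $Z$ be the set of vertices $v_i$ of $S$ such that $b_i(x)=0$. Then $|Z|\le d$.
   Context: Lattice points are points of $\mathbb{Z}^{n+1}$; lattice polytopes are convex hulls of finitely many lattice points. The degree $d$ of $P$ is the degree of the $h^*$-polynomial $h^*_P(t)$ defined by $\sum_{m\ge0}|mP\cap\mathbb{Z}^{n+1}|t^m=h^*_P(t)/(1-t)^{n+1}$; equivalently, $d$ is the largest nonnegative integer such that $(n-d)P$ has no lattice points in its relative interior (so $(n-d+1)P$ does have one). Since $v_0,\dots,v_n$ are linearly independent, every $y\in\mathbb{R}^{n+1}$ can be written uniquely as $y=b_0(y)v_0+\dots+b_n(y)v_n$ with real numbers $b_i(y)$. *)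

theory Defs
  imports "HOL-Analysis.Analysis"
begin

definition lattice_point :: "real ^ 'n \<Rightarrow> bool" where
  "lattice_point y \<longleftrightarrow> (\<forall>i. y $ i \<in> \<int>)"

definition lattice_polytope :: "(real ^ 'n) set \<Rightarrow> bool" where
  "lattice_polytope P \<longleftrightarrow>
     (\<exists>V. finite V \<and> (\<forall>v\<in>V. lattice_point v) \<and> P = convex hull V)"

definition dilate :: "real \<Rightarrow> (real ^ 'n) set \<Rightarrow> (real ^ 'n) set" where
  "dilate m P = (\<lambda>y. m *\<^sub>R y) ` P"

definition has_degree :: "(real ^ 'n) set \<Rightarrow> nat \<Rightarrow> nat \<Rightarrow> bool" where
  "has_degree P n d \<longleftrightarrow> d \<le> n \<and>
     (\<exists>y. lattice_point y \<and> y \<in> rel_interior (dilate (real (n - d + 1)) P)) \<and>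
     (\<forall>k::nat. 1 \<le> k \<and> k \<le> n - d \<longrightarrow>
        \<not> (\<exists>y. lattice_point y \<and> y \<in> rel_interior (dilate (real k) P)))"

end

theory Submission
  imports Defs
begin

text \<open>Write \<open>x = \<Sum> b\<^sub>i v\<^sub>i\<close>. Uniqueness of the coordinates and \<open>x \<in> cone S\<close> force \<open>b\<^sub>i \<ge> 0\<close>,
  and the last coordinate gives \<open>\<Sum> b\<^sub>i = n - d + 1\<close>. Let \<open>T\<close> be the support of \<open>b\<close> and
  \<open>F = conv {v\<^sub>i | i \<in> T}\<close>; then \<open>x/(n-d+1) \<in> relint F \<inter> relint P\<close>, so \<open>relint F \<subseteq> relint P\<close>.
  Subtracting the integer combination \<open>\<Sum> (\<lceil>b\<^sub>i\<rceil> - 1) v\<^sub>i\<close> from \<open>x\<close> leaves a lattice point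
  \<open>\<Sum> c\<^sub>i v\<^sub>i\<close> with \<open>0 < c\<^sub>i \<le> 1\<close>; it lies in \<open>relint (m F) \<subseteq> relint (m P)\<close> for the integer
  \<open>m = \<Sum> c\<^sub>i \<in> [1, |T|]\<close>. By the definition of the degree \<open>m > n - d\<close>, so \<open>|T| \<ge> n - d + 1\<close>.\<close>

lemma convex_hull_indexed_obtain:
  fixes v :: "nat \<Rightarrow> 'a::euclidean_space"
  assumes "finite I" "inj_on v I" "y \<in> convex hull (v ` I)"
  obtains a where "\<forall>i\<in>I. 0 \<le> a i" "sum a I = 1" "y = (\<Sum>i\<in>I. a i *\<^sub>R v i)"
proof -
  obtain u where u: "\<forall>w\<in>v`I. 0 \<le> u w" "sum u (v ` I) = 1" "(\<Sum>w\<in>v`I. u w *\<^sub>R w) = y"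
    using assms(1,3) convex_hull_finite[of "v ` I"] by auto
  have "sum (u \<circ> v) I = 1" "(\<Sum>i\<in>I. (u \<circ> v) i *\<^sub>R v i) = y"
    using u assms(2) by (auto simp: sum.reindex)
  then show ?thesis using u that[of "u \<circ> v"] by auto
qed

lemma rel_interior_convex_hull_indexed:
  fixes v :: "nat \<Rightarrow> 'a::euclidean_space"
  assumes "finite I" "inj_on v I" "\<not> affine_dependent (v ` I)"
    and "\<forall>i\<in>I. 0 < a i" "sum a I = 1"
  shows "(\<Sum>i\<in>I. a i *\<^sub>R v i) \<in> rel_interior (convex hull (v ` I))"
proof -
  define u where "u = a \<circ> inv_into I v"
  have "sum u (v ` I) = sum a I" "(\<Sum>w\<in>v`I. u w *\<^sub>R w) = (\<Sum>i\<in>I. a i *\<^sub>R v i)"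
    using assms(2) by (auto simp: sum.reindex u_def intro!: sum.cong)
  moreover have "\<forall>w\<in>v`I. 0 < u w" using assms by (auto simp: u_def)
  ultimately show ?thesis using assms
    by (subst rel_interior_convex_hull_explicit[OF assms(3)]) (auto intro!: exI[of _ u])
qed

lemma affine_independent_coeffs_unique:
  fixes v :: "nat \<Rightarrow> 'a::euclidean_space"
  assumes "finite I" "inj_on v I" "\<not> affine_dependent (v ` I)" "\<forall>i\<in>I. l \<bullet> v i = 1"
    and "(\<Sum>i\<in>I. a i *\<^sub>R v i) = (\<Sum>i\<in>I. b i *\<^sub>R v i)"
  shows "\<forall>i\<in>I. a i = b i"
proof -
  define c where "c i = a i - b i" for i
  define u where "u = c \<circ> inv_into I v"
  have comb: "(\<Sum>i\<in>I. c i *\<^sub>R v i) = 0"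
    using assms(5) by (simp add: c_def scaleR_diff_left sum_subtractf)
  then have "sum c I = 0"
    using assms(4) by (metis (no_types, lifting) inner_sum_right inner_scaleR_right
        inner_zero_right mult.right_neutral sum.cong)
  then have "sum u (v ` I) = 0" "(\<Sum>w\<in>v`I. u w *\<^sub>R w) = 0"
    using assms(2) comb by (auto simp: sum.reindex u_def intro!: sum.cong)
  then have "\<forall>w\<in>v`I. u w = 0"
    using assms(1,3) affine_dependent_explicit_finite[of "v ` I"] by auto
  then show ?thesis using assms(2) by (auto simp: u_def c_def)
qed

lemma inj_affine_independent_of_aff_dim:
  fixes v :: "nat \<Rightarrow> 'a::euclidean_space"
  assumes "finite I" "aff_dim (convex hull (v ` I)) = int (card I) - 1"
  shows "inj_on v I" "\<not> affine_dependent (v ` I)"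
proof -
  have dim: "aff_dim (v ` I) = int (card I) - 1" using assms(2) by (simp add: aff_dim_convex_hull)
  then have "card I \<le> card (v ` I)"
    using aff_dim_le_card[of "v ` I"] assms(1) by simp
  then have card: "card (v ` I) = card I" using card_image_le[OF assms(1), of v] by simp
  then show "inj_on v I" using assms(1) by (simp add: eq_card_imp_inj_on)
  show "\<not> affine_dependent (v ` I)"
    using affine_independent_iff_card[of "v ` I"] assms(1) card dim by simp
qed

lemma rel_interior_subset_if_rel_interiors_meet:
  fixes S P :: "'a::euclidean_space set"
  assumes "convex S" "convex P" "S \<subseteq> P" "p \<in> rel_interior S" "p \<in> rel_interior P"
  shows "rel_interior S \<subseteq> rel_interior P"
proof (rule subset_rel_interior_convex[OF assms(1,2)])
  show "S \<subseteq> closure P" using assms(3) closure_subset by blast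
  show "\<not> S \<subseteq> rel_frontier P"
    using assms(4,5) rel_interior_subset[of S] unfolding rel_frontier_def by blast
qed

lemma rel_interior_dilate:
  fixes P :: "(real ^ 'n) set"
  assumes "c \<noteq> 0"
  shows "rel_interior (dilate c P) = (\<lambda>y. c *\<^sub>R y) ` rel_interior P"
  unfolding dilate_def
  by (rule rel_interior_injective_linear_image)
     (auto simp: bounded_linear_scaleR_right assms intro!: injI)

lemma positive_combination_in_rel_interior_dilate:
  fixes v :: "nat \<Rightarrow> real ^ 'n"
  assumes "finite I" "inj_on v I" "\<not> affine_dependent (v ` I)" "\<forall>i\<in>I. 0 < c i" "I \<noteq> {}"
    and "rel_interior (convex hull (v ` I)) \<subseteq> rel_interior P"
  shows "(\<Sum>i\<in>I. c i *\<^sub>R v i) \<in> rel_interior (dilate (sum c I) P)"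
proof -
  define K where "K = sum c I"
  have "K > 0" unfolding K_def using assms(1,4,5) by (intro sum_pos) auto
  have "(\<Sum>i\<in>I. (c i / K) *\<^sub>R v i) \<in> rel_interior (convex hull (v ` I))"
    using rel_interior_convex_hull_indexed[OF assms(1-3), of "\<lambda>i. c i / K"] assms(4) \<open>K > 0\<close>
    by (simp add: K_def sum_divide_distrib[symmetric])
  moreover have "(\<Sum>i\<in>I. c i *\<^sub>R v i) = K *\<^sub>R (\<Sum>i\<in>I. (c i / K) *\<^sub>R v i)"
    using \<open>K > 0\<close> by (simp add: scaleR_sum_right)
  ultimately show ?thesis
    using assms(6) rel_interior_dilate[of K P] \<open>K > 0\<close> unfolding K_def by auto
qed

lemma nonneg_coeffs_of_cone_hull:
  fixes v :: "nat \<Rightarrow> 'a::euclidean_space"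
  assumes "finite I" "inj_on v I" "\<not> affine_dependent (v ` I)" "\<forall>i\<in>I. l \<bullet> v i = 1"
    and "x \<in> cone hull (convex hull (v ` I))" "x = (\<Sum>i\<in>I. b i *\<^sub>R v i)"
  shows "\<forall>i\<in>I. 0 \<le> b i"
proof -
  obtain c y where "c \<ge> 0" "y \<in> convex hull (v ` I)" "x = c *\<^sub>R y"
    using assms(5) unfolding cone_hull_expl by blast
  moreover obtain a where "\<forall>i\<in>I. 0 \<le> a i" "y = (\<Sum>i\<in>I. a i *\<^sub>R v i)"
    using convex_hull_indexed_obtain[OF assms(1,2) \<open>y \<in> _\<close>] by metis
  ultimately have "(\<Sum>i\<in>I. b i *\<^sub>R v i) = (\<Sum>i\<in>I. (c * a i) *\<^sub>R v i)"
    using assms(6) by (simp add: scaleR_sum_right)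
  then have "\<forall>i\<in>I. b i = c * a i"
    by (rule affine_independent_coeffs_unique[OF assms(1-4)])
  then show ?thesis using \<open>c \<ge> 0\<close> \<open>\<forall>i\<in>I. 0 \<le> a i\<close> by simp
qed

lemma lattice_point_sum:
  assumes "finite I" "\<forall>i\<in>I. lattice_point (v i)" "\<forall>i\<in>I. a i \<in> \<int>"
  shows "lattice_point (\<Sum>i\<in>I. a i *\<^sub>R v i)"
  using assms unfolding lattice_point_def by (auto intro!: Ints_sum Ints_mult)

lemma lattice_point_fractional_combination:
  fixes v :: "nat \<Rightarrow> real ^ 'n"
  assumes "finite I" "\<forall>i\<in>I. lattice_point (v i)"
    and "lattice_point (\<Sum>i\<in>I. b i *\<^sub>R v i)"
  shows "lattice_point (\<Sum>i\<in>I. (b i - of_int \<lceil>b i\<rceil> + 1) *\<^sub>R v i)"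
proof -
  have "(\<Sum>i\<in>I. (b i - of_int \<lceil>b i\<rceil> + 1) *\<^sub>R v i)
        = (\<Sum>i\<in>I. b i *\<^sub>R v i) - (\<Sum>i\<in>I. of_int (\<lceil>b i\<rceil> - 1) *\<^sub>R v i)"
    by (simp add: sum_subtractf[symmetric] algebra_simps)
  moreover have "lattice_point (\<Sum>i\<in>I. of_int (\<lceil>b i\<rceil> - 1) *\<^sub>R v i)"
    using lattice_point_sum[OF assms(1,2)] by simp
  ultimately show ?thesis
    using assms(3) unfolding lattice_point_def by (simp add: Ints_diff)
qed

lemma rel_interior_face_subset:
  fixes v :: "nat \<Rightarrow> real ^ 'n"
  assumes "finite T" "inj_on v T" "\<not> affine_dependent (v ` T)"
    and "convex P" "v ` T \<subseteq> P" "\<forall>y\<in>P. y $ k = 1"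
    and "\<forall>i\<in>T. 0 < b i" "(\<Sum>i\<in>T. b i *\<^sub>R v i) \<in> rel_interior (dilate h P)" "h > 0"
  shows "rel_interior (convex hull (v ` T)) \<subseteq> rel_interior P"
proof -
  obtain p where p: "p \<in> rel_interior P" "(\<Sum>i\<in>T. b i *\<^sub>R v i) = h *\<^sub>R p"
    using assms(8,9) by (auto simp: rel_interior_dilate)
  have "h = (\<Sum>i\<in>T. b i *\<^sub>R v i) $ k" using p assms(6) rel_interior_subset by auto
  also have "\<dots> = sum b T" using assms(5,6) by (simp add: image_subset_iff)
  finally have "sum b T = h" ..
  have "p = (1 / h) *\<^sub>R (\<Sum>i\<in>T. b i *\<^sub>R v i)" using p(2) assms(9) by simp
  also have "\<dots> = (\<Sum>i\<in>T. (b i / h) *\<^sub>R v i)" by (simp add: scaleR_sum_right)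
  finally have "p \<in> rel_interior (convex hull (v ` T))"
    using rel_interior_convex_hull_indexed[OF assms(1-3), of "\<lambda>i. b i / h"] assms(7,9)
      \<open>sum b T = h\<close> by (simp add: sum_divide_distrib[symmetric])
  moreover have "convex hull (v ` T) \<subseteq> P" using assms(4,5) by (intro hull_minimal)
  ultimately show ?thesis using p(1) assms(4) rel_interior_subset_if_rel_interiors_meet by blast
qed

lemma lattice_point_in_small_dilate:
  fixes v :: "nat \<Rightarrow> real ^ 'n"
  assumes "finite T" "T \<noteq> {}" "inj_on v T" "\<not> affine_dependent (v ` T)"
    and "\<forall>i\<in>T. lattice_point (v i) \<and> v i $ k = 1"
    and "rel_interior (convex hull (v ` T)) \<subseteq> rel_interior P"
    and "\<forall>i\<in>T. 0 < b i" "lattice_point (\<Sum>i\<in>T. b i *\<^sub>R v i)"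
  obtains m :: nat and y where "1 \<le> m" "m \<le> card T" "lattice_point y"
    "y \<in> rel_interior (dilate (real m) P)"
proof -
  define c where "c i = b i - of_int \<lceil>b i\<rceil> + 1" for i
  have c: "0 < c i \<and> c i \<le> 1" for i
    using ceiling_correct[of "b i"] unfolding c_def by linarith
  define y where "y = (\<Sum>i\<in>T. c i *\<^sub>R v i)"
  have y: "lattice_point y"
    unfolding y_def c_def using lattice_point_fractional_combination[OF assms(1) _ assms(8)] assms(5)
    by blast
  have "sum c T = y $ k" unfolding y_def using assms(5) by simp
  then have "sum c T \<in> \<int>" using y unfolding lattice_point_def by simp
  then obtain z where "sum c T = of_int z" by (rule Ints_cases)
  moreover have "sum c T > 0" using c assms(1,2) by (intro sum_pos) auto
  ultimately have m: "sum c T = real (nat z)" "1 \<le> nat z" by auto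
  have "sum c T \<le> real (card T)" using sum_mono[of T c "\<lambda>_. 1"] c by simp
  moreover have "y \<in> rel_interior (dilate (sum c T) P)"
    unfolding y_def
    by (rule positive_combination_in_rel_interior_dilate[OF assms(1,3,4) _ assms(2,6)]) (use c in auto)
  ultimately show ?thesis using that[of "nat z" y] m y by simp
qed

theorem lemma2p2:
  fixes P :: "(real ^ 'n) set" and n d :: nat and k :: 'n
    and x :: "real ^ 'n" and v :: "nat \<Rightarrow> real ^ 'n"
  assumes "CARD('n) = n + 1"
    and "lattice_polytope P" and "aff_dim P = int n"
    and "\<forall>y\<in>P. y $ k = 1"
    and "has_degree P n d"
    and "lattice_point x" and "x \<in> rel_interior (dilate (real (n - d + 1)) P)"
    and "\<forall>i\<le>n. lattice_point (v i) \<and> v i \<in> P"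
    and "aff_dim (convex hull (v ` {..n})) = int n"
    and "x \<in> cone hull (convex hull (v ` {..n}))"
  shows "\<forall>b. x = (\<Sum>i\<le>n. b i *\<^sub>R v i) \<longrightarrow> card {i\<in>{..n}. b i = 0} \<le> d"
proof (intro allI impI)
  fix b assume x: "x = (\<Sum>i\<le>n. b i *\<^sub>R v i)"
  define T where "T = {i\<in>{..n}. b i \<noteq> 0}"
  define Z where "Z = {i\<in>{..n}. b i = 0}"
  have "aff_dim (convex hull (v ` {..n})) = int (card {..n}) - 1" using assms(9) by simp
  note simplex = inj_affine_independent_of_aff_dim[OF finite_atMost this]
  have T: "finite T" "T \<subseteq> {..n}" by (auto simp: T_def)
  then have injT: "inj_on v T" and indepT: "\<not> affine_dependent (v ` T)"
    using inj_on_subset[OF simplex(1)] simplex(2) affine_dependent_subset[of "v ` T" "v ` {..n}"]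
    by (auto simp: image_mono)
  have "\<forall>i\<in>{..n}. axis k 1 \<bullet> v i = 1" using assms(4,8) by (simp add: inner_axis')
  then have pos: "\<forall>i\<in>T. 0 < b i"
    using nonneg_coeffs_of_cone_hull[OF _ simplex _ assms(10) x] by (auto simp: T_def less_le)
  have xT: "x = (\<Sum>i\<in>T. b i *\<^sub>R v i)"
    unfolding x by (rule sum.mono_neutral_right) (auto simp: T_def)
  have "convex P" using assms(2) unfolding lattice_polytope_def by auto
  moreover have "v ` T \<subseteq> P" using T(2) assms(8) by auto
  ultimately have "rel_interior (convex hull (v ` T)) \<subseteq> rel_interior P"
    using rel_interior_face_subset[OF T(1) injT indepT, of P k b "real (n - d + 1)"] pos xT
      assms(4,7) by simp
  moreover have "T \<noteq> {}"
    using xT assms(4,7) rel_interior_subset by (force simp: rel_interior_dilate)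
  ultimately obtain m :: nat and y where "1 \<le> m" "m \<le> card T" "lattice_point y"
      "y \<in> rel_interior (dilate (real m) P)"
    using lattice_point_in_small_dilate[OF T(1) _ injT indepT, of k P b] assms(4,6,8) T(2) pos xT
    by blast
  then have "n - d < card T" using assms(5) unfolding has_degree_def by (meson le_trans not_le)
  moreover have "T \<union> Z = {..n}" "T \<inter> Z = {}" by (auto simp: T_def Z_def)
  then have "card T + card Z = n + 1" using card_Un_disjoint[of T Z] T(1) by (simp add: Z_def)
  ultimately show "card Z \<le> d" by simp
qed

end
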